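(* Let $n\ge 2$ and let $L = sl(n,\mathbb{C}) = \{X\in\mathbb{C}^{n\times n} \mid \operatorname{tr} X = 0\}$. Let $g$ be an inner automorphism of $L$ of order $2$, i.e. $g(X) = AXA^{-1}$ for some $A\in SL(n,\mathbb{C})$, with $g\neq \mathrm{Id}$ and $g^2=\mathrm{Id}$, and let $L = L_0 \oplus L_1$ be the associated $\mathbb{Z}_2$-grading, where $L_0 = \{X : g(X)=X\}$ and $L_1=\{X: g(X) = -X\}$. Then every finite-dimensional irreducible representation $r: L\to \operatorname{End} V$ is compatible with this $\mathbb{Z}_2$-grading, i.e. there exists a decomposition $V = V_0\oplus V_1$ into subspaces such that $r(X_i)V_j\subseteq V_{i+j}$ for all $i,j\in\mathbb{Z}_2$ and all $X_i\in L_i$.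
   Context: For a Lie algebra $L$ with a $G$-grading $L=\bigoplus_{i\in G}L_i$ ($G$ an abelian group, $[L_i,L_j]\subseteq L_{i+j}$), a representation $r:L\to\operatorname{End}V$ is called compatible with the $G$-grading if there is a direct sum decomposition $V=\bigoplus_{i\in G}V_i$ with $r(X_i)V_j\subseteq V_{i+j}$ for all $i,j\in G$ and all $X_i\in L_i$. *)

theory Defs
  imports "HOL-Analysis.Analysis"
begin

definition mscale :: "complex \<Rightarrow> complex^'n^'m \<Rightarrow> complex^'n^'m" where
  "mscale c X = (\<chi> i j. c * X $ i $ j)"

definition mbracket :: "complex^'n^'n \<Rightarrow> complex^'n^'n \<Rightarrow> complex^'n^'n" where
  "mbracket X Y = X ** Y - Y ** X"

definition sl :: "(complex^'n^'n) set" where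
  "sl = {X. trace X = 0}"

definition csubspace :: "(complex^'m) set \<Rightarrow> bool" where
  "csubspace W \<longleftrightarrow> 0 \<in> W \<and> (\<forall>x\<in>W. \<forall>y\<in>W. x + y \<in> W) \<and> (\<forall>c. \<forall>x\<in>W. c *s x \<in> W)"

text \<open>A representation of sl(n,C) on V = complex^'m, with End V identified with
  complex m x m matrices: complex-linear and bracket-preserving on sl(n,C).\<close>
definition is_rep :: "(complex^'n^'n \<Rightarrow> complex^'m^'m) \<Rightarrow> bool" where
  "is_rep r \<longleftrightarrow>
     (\<forall>X\<in>sl. \<forall>Y\<in>sl. r (X + Y) = r X + r Y) \<and>
     (\<forall>c. \<forall>X\<in>sl. r (mscale c X) = mscale c (r X)) \<and>
     (\<forall>X\<in>sl. \<forall>Y\<in>sl. r (mbracket X Y) = mbracket (r X) (r Y))"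

text \<open>Irreducible: V is nonzero (automatic, types are nonempty) and the only
  complex subspaces invariant under all r X, X in sl, are 0 and V.\<close>
definition irreducible_rep :: "(complex^'n^'n \<Rightarrow> complex^'m^'m) \<Rightarrow> bool" where
  "irreducible_rep r \<longleftrightarrow> is_rep r \<and>
     (\<forall>W. csubspace W \<and> (\<forall>X\<in>sl. \<forall>v\<in>W. r X *v v \<in> W) \<longrightarrow> W = {0} \<or> W = UNIV)"

end

theory Submission
  imports Defs "HOL-Computational_Algebra.Fundamental_Theorem_Algebra"
begin

text \<open>Since \<open>X \<mapsto> A X A\<inverse>\<close> is an involution of \<open>sl(n)\<close>, \<open>A\<^sup>2\<close> is scalar, and after rescaling
  \<open>B = A/s\<close> satisfies \<open>B\<^sup>2 = 1\<close>. With the idempotent \<open>P = (1 + B)/2\<close>, \<open>L\<^sub>0\<close> consists of the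
  matrices commuting with \<open>P\<close> and \<open>L\<^sub>1\<close> of those with \<open>P X + X P = X\<close>. By the Peirce
  decomposition, \<open>ad P\<close> has only the eigenvalues \<open>0, \<plusminus>1\<close> on \<open>sl(n)\<close>, so for the traceless part
  \<open>h\<close> of \<open>P\<close> every \<open>r X\<close> shifts the generalized eigenspaces of \<open>r h\<close> by \<open>0\<close> or \<open>\<plusminus>1\<close>. Fixing an
  eigenvalue \<open>\<mu>\<close> of \<open>r h\<close>, the generalized eigenspaces for \<open>\<mu> + \<int>\<close> span an invariant subspace,
  which by irreducibility is \<open>V\<close>; those for \<open>\<mu> + 2\<int>\<close> and \<open>\<mu> + 2\<int> + 1\<close> give \<open>V\<^sub>0\<close> and \<open>V\<^sub>1\<close>.\<close>

lemma matrix_add_rdistrib: "(A + B) ** C = A ** C + B ** C"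
  by (simp add: matrix_matrix_mult_def vec_eq_iff sum.distrib algebra_simps)

lemma matrix_diff_ldistrib: "(A :: 'a::ring_1^'n^'m) ** (B - C) = A ** B - A ** C"
  by (simp add: matrix_matrix_mult_def vec_eq_iff sum_subtractf algebra_simps)

lemma matrix_diff_rdistrib: "((A :: 'a::ring_1^'n^'m) - B) ** C = A ** C - B ** C"
  by (simp add: matrix_matrix_mult_def vec_eq_iff sum_subtractf algebra_simps)

lemma matrix_neg_left: "(- (A :: 'a::ring_1^'n^'m)) ** B = - (A ** B)"
  by (simp add: matrix_matrix_mult_def vec_eq_iff sum_negf)

lemma matrix_neg_right: "(A :: 'a::ring_1^'n^'m) ** (- B) = - (A ** B)"
  by (simp add: matrix_matrix_mult_def vec_eq_iff sum_negf)

lemma mat_matrix_mult: "mat c ** (A :: 'a::semiring_1^'n^'m) = (\<chi> i j. c * A$i$j)"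
  by (simp add: matrix_matrix_mult_def mat_def vec_eq_iff if_distrib if_distribR cong: if_cong)

lemma matrix_mat_mult: "(A :: 'a::comm_semiring_1^'n^'m) ** mat c = (\<chi> i j. c * A$i$j)"
  by (simp add: matrix_matrix_mult_def mat_def vec_eq_iff if_distrib if_distribR mult.commute cong: if_cong)

lemma mat_matrix_mult_commute: "mat c ** (A :: 'a::comm_semiring_1^'n^'m) = A ** mat c"
  by (simp add: mat_matrix_mult matrix_mat_mult)

lemma mat_vector_mult: "mat c *v (v :: 'a::comm_semiring_1^'n) = c *s v"
  by (simp add: matrix_vector_mult_def mat_def vec_eq_iff if_distrib if_distribR cong: if_cong)

lemma matrix_vector_mult_sum_left: "sum f S *v v = (\<Sum>i\<in>S. f i *v v)"
  by (induction S rule: infinite_finite_induct) (auto simp: matrix_vector_mult_add_rdistrib)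

lemma matrix_vector_mult_sum_right: "A *v sum f S = (\<Sum>i\<in>S. A *v f i)"
  by (induction S rule: infinite_finite_induct) (auto simp: matrix_vector_right_distrib)

lemma mat_add: "mat a + mat b = (mat (a + b) :: 'a::monoid_add^'n^'n)"
  by (simp add: mat_def vec_eq_iff)

lemma mat_diff: "mat a - mat b = (mat (a - b) :: 'a::group_add^'n^'n)"
  by (simp add: mat_def vec_eq_iff)

lemma mat_mult_mat: "mat a ** mat b = (mat (a * b) :: 'a::semiring_1^'n^'n)"
  by (simp add: mat_matrix_mult) (simp add: mat_def vec_eq_iff)

lemma mat_mult_mat_left: "mat a ** (mat b ** A) = mat (a * b) ** (A :: 'a::semiring_1^'n^'n)"
  by (simp add: matrix_mul_assoc mat_mult_mat)

lemma matrix_mult_mat_left_commute: "A ** (mat c ** B) = mat c ** (A ** (B :: 'a::comm_semiring_1^'n^'n))"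
  by (simp only: matrix_mul_assoc mat_matrix_mult_commute[where c = c and A = A])

lemma mscale_eq_mat_mult: "mscale c X = mat c ** X"
  by (simp add: mscale_def mat_matrix_mult)

section \<open>Eigenvectors via the fundamental theorem of algebra\<close>

primrec matpow :: "'a::semiring_1^'n^'n \<Rightarrow> nat \<Rightarrow> 'a^'n^'n" where
  "matpow M 0 = mat 1"
| "matpow M (Suc k) = M ** matpow M k"

lemma matpow_add: "matpow M (a + b) = matpow M a ** matpow M b"
  by (induction a) (simp_all add: matrix_mul_assoc)

lemma matpow_intertwine: "A ** R = R ** B \<Longrightarrow> matpow A k ** R = R ** matpow B k"
  by (induction k) (simp_all, metis matrix_mul_assoc)

lemma matpow_eigenvector:
  fixes D :: "'a::field^'n^'n"
  assumes "D *v u = d *s u"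
  shows "matpow D k *v u = d ^ k *s u"
proof (induction k)
  case (Suc k)
  then show ?case
    by (simp add: matrix_vector_mul_assoc[symmetric] vector_scalar_commute assms
        vector_smult_assoc mult.commute)
qed simp

definition matrix_poly :: "'a::comm_ring_1^'n^'n \<Rightarrow> 'a poly \<Rightarrow> 'a^'n^'n" where
  "matrix_poly M p = fold_coeffs (\<lambda>a B. mat a + M ** B) p 0"

lemma matrix_poly_0 [simp]: "matrix_poly M 0 = 0"
  by (simp add: matrix_poly_def)

lemma matrix_poly_pCons: "matrix_poly M (pCons a p) = mat a + M ** matrix_poly M p"
  by (cases "p = 0 \<and> a = 0") (auto simp: matrix_poly_def)

lemma matrix_poly_add: "matrix_poly M (p + q) = matrix_poly M p + matrix_poly M q"
  by (induction p q rule: poly_induct2)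
    (simp_all add: matrix_poly_pCons matrix_add_ldistrib mat_add[symmetric] add_ac)

lemma matrix_poly_diff: "matrix_poly M (p - q) = matrix_poly M p - matrix_poly M q"
  using matrix_poly_add[of M "p - q" q] by (simp add: algebra_simps)

lemma matrix_poly_smult: "matrix_poly M (smult c p) = mat c ** matrix_poly M p"
  by (induction p)
    (simp_all add: matrix_poly_pCons matrix_add_ldistrib mat_mult_mat matrix_mult_mat_left_commute[of M])

lemma matrix_poly_linear_factor: "matrix_poly M ([:- z, 1:] * q) = (M - mat z) ** matrix_poly M q"
  by (simp add: matrix_poly_diff matrix_poly_smult matrix_poly_pCons matrix_diff_rdistrib)

lemma matrix_poly_monom: "matrix_poly M (monom c k) = mat c ** matpow M k"
  by (induction k) (simp_all add: monom_0 monom_Suc matrix_poly_pCons matrix_mult_mat_left_commute[of M])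

lemma matrix_poly_sum: "matrix_poly M (sum f S) = (\<Sum>i\<in>S. matrix_poly M (f i))"
  by (induction S rule: infinite_finite_induct) (auto simp: matrix_poly_add)

lemma matrix_poly_annihilator_eigenvector:
  fixes M :: "complex^'m^'m"
  shows "p \<noteq> 0 \<Longrightarrow> matrix_poly M p *v v = 0 \<Longrightarrow> v \<noteq> 0 \<Longrightarrow> \<exists>\<mu> w. w \<noteq> 0 \<and> M *v w = \<mu> *s w"
proof (induction "degree p" arbitrary: p v rule: less_induct)
  case less
  show ?case
  proof (cases "degree p = 0")
    case True
    then obtain c where "p = [:c:]" by (metis degree_eq_zeroE)
    with less.prems show ?thesis
      by (auto simp: matrix_poly_pCons mat_vector_mult)
  next
    case False
    then have "\<not> constant (poly p)" by (simp add: constant_degree)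
    then obtain z where "poly p z = 0" using fundamental_theorem_of_algebra by blast
    then obtain q where pq: "p = [:-z, 1:] * q" by (metis poly_eq_0_iff_dvd dvdE)
    with less.prems have "q \<noteq> 0" by auto
    then have "degree q < degree p" by (simp add: pq degree_mult_eq del: mult_pCons_left)
    have factor: "(M - mat z) *v (matrix_poly M q *v v) = 0"
      using less.prems(2)
      by (simp add: pq matrix_poly_linear_factor matrix_vector_mul_assoc del: mult_pCons_left)
    show ?thesis
    proof (cases "matrix_poly M q *v v = 0")
      case True
      then show ?thesis
        using less.hyps[OF \<open>degree q < degree p\<close> \<open>q \<noteq> 0\<close>] less.prems(3) by blast
    next
      case False
      with factor show ?thesis
        by (metis matrix_vector_mult_diff_rdistrib mat_vector_mult right_minus_eq)
    qed
  qed
qed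

text \<open>The vectors \<open>M\<^sup>k v\<close>, \<open>k \<le> dim\<close>, are too many to be linearly independent.\<close>

lemma matrix_poly_annihilates_vector:
  fixes M :: "'a::field^'m^'m"
  shows "\<exists>p. p \<noteq> 0 \<and> matrix_poly M p *v v = 0"
proof -
  define x where "x k = matpow M k *v v" for k
  define N where "N = vec.dim (UNIV :: ('a^'m) set)"
  show ?thesis
  proof (cases "inj_on x {..N}")
    case False
    then obtain i j where ij: "i \<noteq> j" "x i = x j" unfolding inj_on_def by blast
    define p where "p = monom (1::'a) i - monom 1 j"
    have "coeff p i = 1" using ij by (simp add: p_def coeff_monom)
    moreover have "matrix_poly M p *v v = 0"
      using ij by (simp add: p_def matrix_poly_diff matrix_poly_monom matrix_vector_mult_diff_rdistrib
          matrix_vector_mul_assoc[symmetric] x_def)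
    ultimately show ?thesis by (metis one_neq_zero coeff_0)
  next
    case True
    define S where "S = x ` {..N}"
    have "vec.dependent S"
    proof (rule ccontr)
      assume "\<not> vec.dependent S"
      then have "card S \<le> vec.dim S" using vec.independent_bound_general by blast
      also have "\<dots> \<le> N" unfolding N_def by (rule vec.dim_subset) simp
      finally show False using True by (simp add: S_def card_image)
    qed
    then obtain u where u: "\<exists>y\<in>S. u y \<noteq> 0" "(\<Sum>y\<in>S. u y *s y) = 0"
      using vec.dependent_finite[of S] by (auto simp: S_def)
    then obtain k0 where k0: "k0 \<le> N" "u (x k0) \<noteq> 0" unfolding S_def by auto
    define p where "p = (\<Sum>k\<le>N. monom (u (x k)) k)"
    have "coeff p k0 \<noteq> 0"
      using k0 by (simp add: p_def coeff_sum coeff_monom)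
    then have "p \<noteq> 0" by auto
    have "matrix_poly M p *v v = (\<Sum>k\<le>N. u (x k) *s x k)"
      by (simp add: p_def matrix_poly_sum matrix_poly_monom matrix_vector_mult_sum_left
          matrix_vector_mul_assoc[symmetric] mat_vector_mult x_def)
    also have "\<dots> = (\<Sum>y\<in>S. u y *s y)"
      unfolding S_def using sum.reindex[OF True, of "\<lambda>y. u y *s y"] by simp
    also have "\<dots> = 0" by (rule u(2))
    finally show ?thesis using \<open>p \<noteq> 0\<close> by blast
  qed
qed

lemma matrix_has_eigenvector:
  fixes M :: "complex^'m^'m"
  shows "\<exists>\<mu> w. w \<noteq> 0 \<and> M *v w = \<mu> *s w"
proof -
  define v :: "complex^'m" where "v = (\<chi> i. 1)"
  have "v \<noteq> 0" by (simp add: v_def vec_eq_iff)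
  moreover obtain p where "p \<noteq> 0" "matrix_poly M p *v v = 0"
    using matrix_poly_annihilates_vector by blast
  ultimately show ?thesis using matrix_poly_annihilator_eigenvector by blast
qed

lemma csubspace_zero: "csubspace W \<Longrightarrow> 0 \<in> W"
  by (simp add: csubspace_def)

lemma csubspace_add: "csubspace W \<Longrightarrow> x \<in> W \<Longrightarrow> y \<in> W \<Longrightarrow> x + y \<in> W"
  by (simp add: csubspace_def)

lemma csubspace_scale: "csubspace W \<Longrightarrow> x \<in> W \<Longrightarrow> c *s x \<in> W"
  by (simp add: csubspace_def)

lemma csubspace_diff: "csubspace W \<Longrightarrow> x \<in> W \<Longrightarrow> y \<in> W \<Longrightarrow> x - y \<in> W"
  using csubspace_add[of W x "(-1) *s y"] csubspace_scale[of W y "-1"]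
  by (simp add: vec_eq_iff[of "x - y"])

section \<open>Generalized eigenspaces\<close>

definition gen_eigenspace :: "complex^'m^'m \<Rightarrow> complex \<Rightarrow> (complex^'m) set" where
  "gen_eigenspace M \<mu> = {v. \<exists>k. matpow (M - mat \<mu>) k *v v = 0}"

lemma eigenvector_in_gen_eigenspace: "M *v w = \<mu> *s w \<Longrightarrow> w \<in> gen_eigenspace M \<mu>"
  unfolding gen_eigenspace_def
  by (intro CollectI exI[of _ 1]) (simp add: matrix_vector_mult_diff_rdistrib mat_vector_mult)

lemma csubspace_gen_eigenspace: "csubspace (gen_eigenspace M \<mu>)"
  unfolding csubspace_def
proof (intro conjI ballI allI)
  show "0 \<in> gen_eigenspace M \<mu>" by (simp add: gen_eigenspace_def)
next
  fix x y assume "x \<in> gen_eigenspace M \<mu>" "y \<in> gen_eigenspace M \<mu>"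
  then obtain k l where "matpow (M - mat \<mu>) k *v x = 0" "matpow (M - mat \<mu>) l *v y = 0"
    unfolding gen_eigenspace_def by blast
  then have "matpow (M - mat \<mu>) (l + k) *v x = 0" "matpow (M - mat \<mu>) (k + l) *v y = 0"
    by (simp_all only: matpow_add matrix_vector_mul_assoc[symmetric] matrix_vector_mult_0_right)
  then have "matpow (M - mat \<mu>) (k + l) *v (x + y) = 0"
    by (simp add: matrix_vector_right_distrib add.commute[of l k])
  then show "x + y \<in> gen_eigenspace M \<mu>"
    unfolding gen_eigenspace_def by blast
next
  fix c x assume "x \<in> gen_eigenspace M \<mu>"
  then show "c *s x \<in> gen_eigenspace M \<mu>"
    by (auto simp: gen_eigenspace_def vector_scalar_commute)
qed

lemma gen_eigenspace_shift:
  assumes "M ** R = R ** (M + mat \<delta>)" and "v \<in> gen_eigenspace M \<mu>"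
  shows "R *v v \<in> gen_eigenspace M (\<mu> + \<delta>)"
proof -
  have "(M - mat (\<mu> + \<delta>)) ** R = R ** (M + mat \<delta> - mat (\<mu> + \<delta>))"
    by (simp add: matrix_diff_rdistrib matrix_diff_ldistrib assms(1) mat_matrix_mult_commute)
  also have "M + mat \<delta> - mat (\<mu> + \<delta>) = M - mat \<mu>"
    by (simp add: mat_diff[symmetric] mat_add[symmetric])
  finally have "matpow (M - mat (\<mu> + \<delta>)) k ** R = R ** matpow (M - mat \<mu>) k" for k
    by (rule matpow_intertwine)
  moreover obtain k where "matpow (M - mat \<mu>) k *v v = 0"
    using assms(2) unfolding gen_eigenspace_def by auto
  ultimately have "matpow (M - mat (\<mu> + \<delta>)) k *v (R *v v) = 0"
    by (metis matrix_vector_mul_assoc matrix_vector_mult_0_right)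
  then show ?thesis unfolding gen_eigenspace_def by auto
qed

lemma gen_eigenspace_commute:
  "M ** T = T ** M \<Longrightarrow> v \<in> gen_eigenspace M \<mu> \<Longrightarrow> T *v v \<in> gen_eigenspace M \<mu>"
  using gen_eigenspace_shift[of M T 0 v \<mu>] by simp

text \<open>A vector killed by \<open>M - \<mu>\<close> is an eigenvector of \<open>M - \<nu>\<close> for the nonzero eigenvalue
  \<open>\<mu> - \<nu>\<close>, so no power of \<open>M - \<nu>\<close> kills it unless it is \<open>0\<close>; induct on the power of
  \<open>M - \<mu>\<close> killing \<open>w\<close>.\<close>

lemma gen_eigenspace_disjoint:
  assumes "w \<in> gen_eigenspace M \<mu>" "w \<in> gen_eigenspace M \<nu>" "\<mu> \<noteq> \<nu>"
  shows "w = 0"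
proof -
  define N where "N = M - mat \<mu>"
  define D where "D = M - mat \<nu>"
  have DN: "D = N + mat (\<mu> - \<nu>)"
    by (simp add: N_def D_def mat_diff[symmetric])
  have "N ** matpow D b = matpow D b ** N" for b
    by (rule matpow_intertwine[symmetric])
      (simp add: DN matrix_add_ldistrib matrix_add_rdistrib mat_matrix_mult_commute)
  then have DN_commute: "matpow D b ** matpow N a = matpow N a ** matpow D b" for a b
    by (metis matpow_intertwine)
  obtain b where b: "matpow D b *v w = 0" using assms(2) by (auto simp: gen_eigenspace_def D_def)
  have "matpow N a *v w = 0 \<Longrightarrow> w = 0" for a
  proof (induction a)
    case (Suc a)
    define u where "u = matpow N a *v w"
    have "N *v u = 0" using Suc.prems by (simp add: u_def matrix_vector_mul_assoc)
    then have "D *v u = (\<mu> - \<nu>) *s u"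
      by (simp add: DN matrix_vector_mult_add_rdistrib mat_vector_mult)
    then have "matpow D b *v u = (\<mu> - \<nu>) ^ b *s u" by (rule matpow_eigenvector)
    moreover have "matpow D b *v u = 0"
      by (metis u_def b DN_commute matrix_vector_mul_assoc matrix_vector_mult_0_right)
    ultimately have "u = 0" using assms(3) by simp
    then show ?case using Suc.IH u_def by simp
  qed simp
  moreover obtain a where "matpow N a *v w = 0"
    using assms(1) by (auto simp: gen_eigenspace_def N_def)
  ultimately show ?thesis by blast
qed

lemma gen_eigenspaces_independent:
  assumes "finite S" "inj_on \<mu> S" "\<forall>i\<in>S. F i \<in> gen_eigenspace M (\<mu> i)" "(\<Sum>i\<in>S. F i) = 0"
  shows "\<forall>i\<in>S. F i = 0"
  using assms
proof (induction S arbitrary: F rule: finite_induct)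
  case (insert j S)
  obtain k where k: "matpow (M - mat (\<mu> j)) k *v F j = 0"
    using insert.prems(2) by (auto simp: gen_eigenspace_def)
  define T where "T = matpow (M - mat (\<mu> j)) k"
  have TM: "M ** T = T ** M"
    unfolding T_def
    by (rule matpow_intertwine[symmetric])
      (simp add: matrix_diff_ldistrib matrix_diff_rdistrib mat_matrix_mult_commute)
  have sumS: "(\<Sum>i\<in>S. F i) = - F j"
    using insert.prems(3) insert.hyps by (simp add: eq_neg_iff_add_eq_0 add.commute)
  have "(\<Sum>i\<in>S. T *v F i) = - (T *v F j)"
    by (simp add: matrix_vector_mult_sum_right[symmetric] sumS
        matrix_vector_mult_diff_distrib[of T 0, simplified])
  also have "\<dots> = 0" using k by (simp add: T_def)
  finally have TF: "\<forall>i\<in>S. T *v F i = 0"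
    using insert.IH[of "\<lambda>i. T *v F i"] insert.prems gen_eigenspace_commute[OF TM] by auto
  have FS: "F i = 0" if "i \<in> S" for i
  proof (rule gen_eigenspace_disjoint)
    show "F i \<in> gen_eigenspace M (\<mu> j)"
      using TF that unfolding gen_eigenspace_def T_def by blast
    show "F i \<in> gen_eigenspace M (\<mu> i)" "\<mu> j \<noteq> \<mu> i"
      using insert that by auto
  qed
  with sumS show ?case by simp
qed simp

definition gen_eigensum :: "complex^'m^'m \<Rightarrow> complex \<Rightarrow> int set \<Rightarrow> (complex^'m) set" where
  "gen_eigensum M \<mu> I = {\<Sum>i\<in>S. F i | S F. finite S \<and> S \<subseteq> I \<and>
     (\<forall>i. F i \<in> gen_eigenspace M (\<mu> + of_int i)) \<and> (\<forall>i. i \<notin> S \<longrightarrow> F i = 0)}"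

lemma gen_eigensumE:
  assumes "v \<in> gen_eigensum M \<mu> I"
  obtains S F where "finite S" "S \<subseteq> I" "\<And>i. F i \<in> gen_eigenspace M (\<mu> + of_int i)"
    "\<And>i. i \<notin> S \<Longrightarrow> F i = 0" "\<And>T. finite T \<Longrightarrow> S \<subseteq> T \<Longrightarrow> v = (\<Sum>i\<in>T. F i)"
proof -
  obtain S F where S: "v = (\<Sum>i\<in>S. F i)" "finite S" "S \<subseteq> I"
    "\<forall>i. F i \<in> gen_eigenspace M (\<mu> + of_int i)" "\<forall>i. i \<notin> S \<longrightarrow> F i = 0"
    using assms unfolding gen_eigensum_def by blast
  moreover have "v = (\<Sum>i\<in>T. F i)" if "finite T" "S \<subseteq> T" for T
    using S that by (auto intro: sum.mono_neutral_left)
  ultimately show thesis using that by blast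
qed

lemma gen_eigensumI:
  assumes "finite S" "S \<subseteq> I" "\<And>i. i \<in> S \<Longrightarrow> F i \<in> gen_eigenspace M (\<mu> + of_int i)"
  shows "(\<Sum>i\<in>S. F i) \<in> gen_eigensum M \<mu> I"
proof -
  have "(\<Sum>i\<in>S. F i) = (\<Sum>i\<in>S. if i \<in> S then F i else 0)" by simp
  then show ?thesis
    using assms csubspace_zero[OF csubspace_gen_eigenspace]
    unfolding gen_eigensum_def
    by (intro CollectI exI[of _ S] exI[of _ "\<lambda>i. if i \<in> S then F i else 0"]) auto
qed

lemma gen_eigenspace_subset_gen_eigensum:
  assumes "0 \<in> I" "v \<in> gen_eigenspace M \<mu>"
  shows "v \<in> gen_eigensum M \<mu> I"
  using gen_eigensumI[of "{0}" I "\<lambda>_. v" M \<mu>] assms by simp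

lemma csubspace_gen_eigensum: "csubspace (gen_eigensum M \<mu> I)"
  unfolding csubspace_def
proof (intro conjI ballI allI)
  show "0 \<in> gen_eigensum M \<mu> I"
    using gen_eigensumI[of "{}" I] by simp
next
  fix x y assume "x \<in> gen_eigensum M \<mu> I" "y \<in> gen_eigensum M \<mu> I"
  then obtain S F T G where
    x: "finite S" "S \<subseteq> I" "\<And>i. F i \<in> gen_eigenspace M (\<mu> + of_int i)"
       "\<And>U. finite U \<Longrightarrow> S \<subseteq> U \<Longrightarrow> x = (\<Sum>i\<in>U. F i)" and
    y: "finite T" "T \<subseteq> I" "\<And>i. G i \<in> gen_eigenspace M (\<mu> + of_int i)"
       "\<And>U. finite U \<Longrightarrow> T \<subseteq> U \<Longrightarrow> y = (\<Sum>i\<in>U. G i)"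
    by (elim gen_eigensumE) blast
  have "(\<Sum>i\<in>S \<union> T. F i + G i) \<in> gen_eigensum M \<mu> I"
    using x y by (intro gen_eigensumI csubspace_add[OF csubspace_gen_eigenspace]) auto
  then show "x + y \<in> gen_eigensum M \<mu> I"
    using x(1) y(1) x(4)[of "S \<union> T"] y(4)[of "S \<union> T"] by (simp add: sum.distrib)
next
  fix c x assume "x \<in> gen_eigensum M \<mu> I"
  then obtain S F where "finite S" "S \<subseteq> I" "\<And>i. F i \<in> gen_eigenspace M (\<mu> + of_int i)"
    "x = (\<Sum>i\<in>S. F i)"
    by (elim gen_eigensumE) blast
  then show "c *s x \<in> gen_eigensum M \<mu> I"
    by (auto simp: sum_cmul[symmetric] intro!: gen_eigensumI csubspace_scale[OF csubspace_gen_eigenspace])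
qed

lemma gen_eigensum_shift:
  assumes MR: "M ** R = R ** (M + mat (of_int \<delta>))" and IJ: "\<And>i. i \<in> I \<Longrightarrow> i + \<delta> \<in> J"
    and v: "v \<in> gen_eigensum M \<mu> I"
  shows "R *v v \<in> gen_eigensum M \<mu> J"
proof -
  obtain S F where S: "finite S" "S \<subseteq> I" "\<And>i. F i \<in> gen_eigenspace M (\<mu> + of_int i)"
    "v = (\<Sum>i\<in>S. F i)"
    using v by (elim gen_eigensumE) blast
  have "R *v v = (\<Sum>i\<in>(\<lambda>i. i + \<delta>) ` S. R *v F (i - \<delta>))"
    by (simp add: S(4) matrix_vector_mult_sum_right sum.reindex inj_on_def)
  also have "\<dots> \<in> gen_eigensum M \<mu> J"
  proof (rule gen_eigensumI)
    show "R *v F (i - \<delta>) \<in> gen_eigenspace M (\<mu> + of_int i)" for i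
      using gen_eigenspace_shift[OF MR S(3)[of "i - \<delta>"]] by (simp add: add.assoc)
  qed (use S IJ in auto)
  finally show ?thesis .
qed

lemma gen_eigensum_Un:
  assumes "v \<in> gen_eigensum M \<mu> (I \<union> J)"
  shows "\<exists>a\<in>gen_eigensum M \<mu> I. \<exists>b\<in>gen_eigensum M \<mu> J. v = a + b"
proof -
  obtain S F where S: "finite S" "S \<subseteq> I \<union> J" "\<And>i. F i \<in> gen_eigenspace M (\<mu> + of_int i)"
    "v = (\<Sum>i\<in>S. F i)"
    using assms by (elim gen_eigensumE) blast
  have "v = (\<Sum>i\<in>S \<inter> I. F i) + (\<Sum>i\<in>S - I. F i)"
    using S(1,4) by (simp add: sum.Int_Diff)
  moreover have "(\<Sum>i\<in>S \<inter> I. F i) \<in> gen_eigensum M \<mu> I"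
    using S by (intro gen_eigensumI) auto
  moreover have "(\<Sum>i\<in>S - I. F i) \<in> gen_eigensum M \<mu> J"
    using S by (intro gen_eigensumI) auto
  ultimately show ?thesis by blast
qed

lemma gen_eigensum_disjoint:
  assumes "I \<inter> J = {}"
  shows "gen_eigensum M \<mu> I \<inter> gen_eigensum M \<mu> J = {0}"
proof
  show "{0} \<subseteq> gen_eigensum M \<mu> I \<inter> gen_eigensum M \<mu> J"
    using csubspace_zero[OF csubspace_gen_eigensum] by blast
next
  show "gen_eigensum M \<mu> I \<inter> gen_eigensum M \<mu> J \<subseteq> {0}"
  proof
    fix v assume "v \<in> gen_eigensum M \<mu> I \<inter> gen_eigensum M \<mu> J"
    then have "v \<in> gen_eigensum M \<mu> I" "v \<in> gen_eigensum M \<mu> J" by auto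
    then obtain S F T G where
      v: "finite S" "S \<subseteq> I" "\<And>i. F i \<in> gen_eigenspace M (\<mu> + of_int i)"
         "\<And>i. i \<notin> S \<Longrightarrow> F i = 0" "\<And>U. finite U \<Longrightarrow> S \<subseteq> U \<Longrightarrow> v = (\<Sum>i\<in>U. F i)" and
      w: "finite T" "T \<subseteq> J" "\<And>i. G i \<in> gen_eigenspace M (\<mu> + of_int i)"
         "\<And>i. i \<notin> T \<Longrightarrow> G i = 0" "\<And>U. finite U \<Longrightarrow> T \<subseteq> U \<Longrightarrow> v = (\<Sum>i\<in>U. G i)"
      by (elim gen_eigensumE) blast
    have FG: "\<forall>i\<in>S \<union> T. F i - G i = 0"
    proof (rule gen_eigenspaces_independent[where \<mu> = "\<lambda>i. \<mu> + of_int i" and M = M])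
      show "\<forall>i\<in>S \<union> T. F i - G i \<in> gen_eigenspace M (\<mu> + of_int i)"
        using v(3) w(3) by (simp add: csubspace_diff[OF csubspace_gen_eigenspace])
    qed (use v(1) w(1) v(5)[of "S \<union> T"] w(5)[of "S \<union> T"] in \<open>auto simp: inj_on_def sum_subtractf\<close>)
    have "F i = 0" for i
    proof (cases "i \<in> S")
      case True
      then have "i \<notin> T" using v(2) w(2) assms by blast
      then show ?thesis using True FG w(4) by auto
    qed (use v(4) in auto)
    then show "v \<in> {0}" using v(1) v(5)[of S] by simp
  qed
qed

section \<open>Involutive inner automorphisms of \<open>sl(n)\<close>\<close>

lemma zero_in_sl: "0 \<in> sl"
  by (simp add: sl_def trace_def)

lemma sl_add: "X \<in> sl \<Longrightarrow> Y \<in> sl \<Longrightarrow> X + Y \<in> sl"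
  by (simp add: sl_def trace_add)

lemma sl_centralizer_scalar:
  fixes C :: "complex^'n^'n"
  assumes comm: "\<forall>X\<in>sl. C ** X = X ** C"
  shows "\<exists>l. C = mat l"
proof -
  define E :: "'n \<Rightarrow> 'n \<Rightarrow> complex^'n^'n"
    where "E i j = (\<chi> a b. if a = i \<and> b = j then 1 else 0)" for i j
  have E_sl: "E i j \<in> sl" if "i \<noteq> j" for i j
    using that unfolding sl_def trace_def E_def by (auto intro!: sum.neutral)
  have CE: "(C ** E i j)$a$b = (if b = j then C$a$i else 0)" for i j a b
    unfolding matrix_matrix_mult_def E_def
    by (simp add: if_distrib if_distribR conj_commute cong: if_cong)
  have EC: "(E i j ** C)$a$b = (if a = i then C$j$b else 0)" for i j a b
    unfolding matrix_matrix_mult_def E_def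
    by (simp add: if_distrib if_distribR cong: if_cong)
  have off_diag: "C$a$i = 0" if "a \<noteq> i" for a i
    using arg_cong[where f = "\<lambda>Y. Y$a$a", OF comm[rule_format, OF E_sl[of i a]]] that
    by (simp add: CE EC)
  have diag: "C$i$i = C$j$j" if "i \<noteq> j" for i j
    using arg_cong[where f = "\<lambda>Y. Y$i$j", OF comm[rule_format, OF E_sl[of i j]]] that
    by (simp add: CE EC)
  have "C = mat (C$i$i)" for i
    by (auto simp: vec_eq_iff mat_def off_diag intro: diag)
  then show ?thesis by blast
qed

lemma inner_involution_normalize:
  fixes A Ainv :: "complex^'n^'n"
  assumes inv1: "A ** Ainv = mat 1" and inv2: "Ainv ** A = mat 1"
    and invol: "\<forall>X\<in>sl. A ** (A ** X ** Ainv) ** Ainv = X"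
  obtains B where "B ** B = mat 1"
    "\<And>X. A ** X ** Ainv = X \<Longrightarrow> B ** X = X ** B"
    "\<And>X. A ** X ** Ainv = - X \<Longrightarrow> B ** X = - (X ** B)"
proof -
  have cancel: "Y ** Ainv ** A = Y" for Y :: "complex^'n^'n"
    by (metis inv2 matrix_mul_assoc matrix_mul_rid)
  have "(A ** A) ** X = X ** (A ** A)" if "X \<in> sl" for X
  proof -
    have "X ** (A ** A) = A ** A ** X ** Ainv ** Ainv ** A ** A"
      using invol that by (simp add: matrix_mul_assoc)
    then show ?thesis by (simp add: cancel)
  qed
  then obtain l where AA: "A ** A = mat l" using sl_centralizer_scalar by blast
  have "l \<noteq> 0"
  proof
    assume "l = 0"
    have "mat 1 = Ainv ** (Ainv ** A) ** A" by (simp add: inv2)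
    also have "\<dots> = Ainv ** Ainv ** (A ** A)" by (simp only: matrix_mul_assoc)
    also have "\<dots> = 0" by (simp add: AA \<open>l = 0\<close>)
    finally have "(mat 1 :: complex^'n^'n) $ i $ i = 0" for i by simp
    then show False by (simp add: mat_def)
  qed
  define s where "s = csqrt l"
  have "s * s = l" using power2_csqrt[of l] by (simp add: s_def power2_eq_square)
  with \<open>l \<noteq> 0\<close> have "s \<noteq> 0" by auto
  define B where "B = mat (1 / s) ** A"
  show ?thesis
  proof
    have "B ** B = mat (1/s) ** (A ** (mat (1/s) ** A))"
      by (simp only: B_def matrix_mul_assoc)
    also have "\<dots> = mat (1/s * (1/s * l))"
      by (simp only: matrix_mult_mat_left_commute[of A] mat_mult_mat_left AA mat_mult_mat)
    also have "1/s * (1/s * l) = 1"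
      using \<open>s * s = l\<close> \<open>l \<noteq> 0\<close> by (auto simp: field_simps)
    finally show "B ** B = mat 1" .
  next
    fix X assume "A ** X ** Ainv = X"
    then have "A ** X = X ** A" by (metis cancel)
    then show "B ** X = X ** B"
      by (simp add: B_def matrix_mul_assoc[symmetric] matrix_mult_mat_left_commute[of X])
  next
    fix X assume "A ** X ** Ainv = - X"
    then have "A ** X = - (X ** A)" by (metis cancel matrix_neg_left)
    then show "B ** X = - (X ** B)"
      by (simp add: B_def matrix_mul_assoc[symmetric] matrix_mult_mat_left_commute[of X] matrix_neg_right)
  qed
qed

lemma involution_idempotent:
  fixes B :: "complex^'n^'n"
  assumes BB: "B ** B = mat 1"
  defines "P \<equiv> mat (1/2) ** (mat 1 + B)"
  shows "P ** P = P"
    and "B ** X = X ** B \<Longrightarrow> P ** X = X ** P"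
    and "B ** X = - (X ** B) \<Longrightarrow> P ** X + X ** P = X"
proof -
  have PX: "P ** X = mat (1/2) ** (X + B ** X)" for X
    by (simp add: P_def matrix_mul_assoc[symmetric] matrix_add_rdistrib)
  have XP: "X ** P = mat (1/2) ** (X + X ** B)" for X
    unfolding P_def matrix_mult_mat_left_commute[of X] by (simp add: matrix_add_ldistrib)
  have "B ** P = P"
    unfolding P_def matrix_mult_mat_left_commute[of B] by (simp add: matrix_add_ldistrib BB add.commute)
  then show "P ** P = P"
    unfolding PX by (simp add: mat_matrix_mult vec_eq_iff)
  show "B ** X = X ** B \<Longrightarrow> P ** X = X ** P"
    by (simp add: PX XP)
  show "B ** X = - (X ** B) \<Longrightarrow> P ** X + X ** P = X"
    by (simp add: PX XP mat_matrix_mult vec_eq_iff field_simps)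
qed

section \<open>Peirce decomposition and representations\<close>

definition peirce_raise :: "complex^'n^'n \<Rightarrow> complex^'n^'n \<Rightarrow> complex^'n^'n" where
  "peirce_raise P X = P ** X ** (mat 1 - P)"

definition peirce_lower :: "complex^'n^'n \<Rightarrow> complex^'n^'n \<Rightarrow> complex^'n^'n" where
  "peirce_lower P X = (mat 1 - P) ** X ** P"

definition peirce_diag :: "complex^'n^'n \<Rightarrow> complex^'n^'n \<Rightarrow> complex^'n^'n" where
  "peirce_diag P X = X - peirce_raise P X - peirce_lower P X"

lemmas peirce_defs = peirce_raise_def peirce_lower_def peirce_diag_def

lemma idempotent_mult_twice: "P ** P = P \<Longrightarrow> Y ** P ** P = Y ** P"
  by (metis matrix_mul_assoc)

lemma mbracket_eq_peirce: "mbracket P X = peirce_raise P X - peirce_lower P X"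
  by (simp add: mbracket_def peirce_defs matrix_diff_ldistrib matrix_diff_rdistrib matrix_mul_assoc)

lemma mbracket_diff_right: "mbracket P (X - Y) = mbracket P X - mbracket P Y"
  by (simp add: mbracket_def matrix_diff_ldistrib matrix_diff_rdistrib)

lemma
  assumes "P ** P = P"
  shows mbracket_peirce_raise: "mbracket P (peirce_raise P X) = peirce_raise P X"
    and mbracket_peirce_lower: "mbracket P (peirce_lower P X) = - peirce_lower P X"
    and mbracket_peirce_diag: "mbracket P (peirce_diag P X) = 0"
proof -
  show raise: "mbracket P (peirce_raise P X) = peirce_raise P X"
    and lower: "mbracket P (peirce_lower P X) = - peirce_lower P X"
    by (simp_all add: mbracket_def peirce_defs matrix_diff_ldistrib matrix_diff_rdistrib
        matrix_mul_assoc assms idempotent_mult_twice[OF assms])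
  show "mbracket P (peirce_diag P X) = 0"
    unfolding peirce_diag_def mbracket_diff_right raise lower mbracket_eq_peirce[of P X] by simp
qed

lemma peirce_in_sl:
  assumes "P ** P = P" "X \<in> sl"
  shows "peirce_raise P X \<in> sl" "peirce_lower P X \<in> sl" "peirce_diag P X \<in> sl"
proof -
  have "trace (P ** X ** P) = trace (P ** X)"
    by (metis assms(1) matrix_mul_assoc trace_mul_sym)
  moreover have "trace (X ** P) = trace (P ** X)" by (rule trace_mul_sym)
  ultimately show "peirce_raise P X \<in> sl" "peirce_lower P X \<in> sl"
    by (simp_all add: sl_def peirce_raise_def peirce_lower_def matrix_diff_ldistrib
        matrix_diff_rdistrib trace_sub)
  with assms(2) show "peirce_diag P X \<in> sl"
    by (simp add: sl_def peirce_diag_def trace_sub)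
qed

lemma peirce_commuting:
  assumes "P ** P = P" "P ** X = X ** P"
  shows "peirce_raise P X = 0" "peirce_lower P X = 0"
  using assms by (simp_all add: peirce_defs matrix_diff_ldistrib matrix_diff_rdistrib)
    (metis matrix_mul_assoc)+

lemma peirce_anticommuting:
  assumes PP: "P ** P = P" and anti: "P ** X + X ** P = X"
  shows "peirce_diag P X = 0"
proof -
  have "P ** X ** P = P ** (X - P ** X)"
    by (metis anti add_diff_cancel_left' matrix_mul_assoc)
  also have "\<dots> = 0" using PP by (simp add: matrix_diff_ldistrib matrix_mul_assoc)
  finally show ?thesis
    using anti by (simp add: peirce_defs matrix_diff_ldistrib matrix_diff_rdistrib algebra_simps)
qed

definition traceless_part :: "complex^'n^'n \<Rightarrow> complex^'n^'n" where
  "traceless_part X = X - mat (trace X / of_nat CARD('n))"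

lemma trace_mat: "trace (mat c :: 'a::semiring_1^'n^'n) = of_nat CARD('n) * c"
  by (simp add: trace_def mat_def)

lemma traceless_part_in_sl: "traceless_part X \<in> sl"
  by (simp add: sl_def traceless_part_def trace_sub trace_mat)

lemma mbracket_traceless_part: "mbracket (traceless_part X) Y = mbracket X Y"
  by (simp add: mbracket_def traceless_part_def matrix_diff_rdistrib matrix_diff_ldistrib
      mat_matrix_mult_commute)

lemma mscale_one [simp]: "mscale 1 X = X"
  by (simp add: mscale_eq_mat_mult)

lemma mscale_minus_one [simp]: "mscale (- 1) X = - X"
  by (simp add: mscale_def vec_eq_iff)

lemma mscale_zero [simp]: "mscale 0 X = 0"
  by (simp add: mscale_eq_mat_mult)

lemma irreducible_repD:
  "irreducible_rep r \<Longrightarrow> csubspace W \<Longrightarrow> (\<And>X v. X \<in> sl \<Longrightarrow> v \<in> W \<Longrightarrow> r X *v v \<in> W) \<Longrightarrow>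
    W = {0} \<or> W = UNIV"
  unfolding irreducible_rep_def by blast

lemma is_rep_add: "is_rep r \<Longrightarrow> X \<in> sl \<Longrightarrow> Y \<in> sl \<Longrightarrow> r (X + Y) = r X + r Y"
  by (simp add: is_rep_def)

lemma is_rep_zero: "is_rep r \<Longrightarrow> r 0 = 0"
  using is_rep_add[OF _ zero_in_sl zero_in_sl] by simp

lemma is_rep_peirce_decomposition:
  assumes "is_rep r" "P ** P = P" "X \<in> sl"
  shows "r X = r (peirce_diag P X) + r (peirce_raise P X) + r (peirce_lower P X)"
proof -
  have "r X = r (peirce_diag P X + peirce_raise P X + peirce_lower P X)"
    by (simp add: peirce_diag_def)
  also have "\<dots> = r (peirce_diag P X) + r (peirce_raise P X) + r (peirce_lower P X)"
    by (simp add: is_rep_add[OF assms(1)] sl_add peirce_in_sl[OF assms(2,3)])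
  finally show ?thesis .
qed

lemma is_rep_ad_eigenvector:
  assumes rep: "is_rep r" and "h \<in> sl" "Y \<in> sl" and hY: "mbracket h Y = mscale d Y"
  shows "r h ** r Y = r Y ** (r h + mat d)"
proof -
  have "mbracket (r h) (r Y) = r (mbracket h Y)"
    using rep assms(2,3) by (simp add: is_rep_def)
  also have "\<dots> = mscale d (r Y)"
    using rep assms(3) by (simp add: hY is_rep_def)
  finally have "mbracket (r h) (r Y) = mat d ** r Y"
    by (simp add: mscale_eq_mat_mult)
  then show ?thesis
    by (simp add: mbracket_def matrix_add_ldistrib mat_matrix_mult_commute algebra_simps)
qed

lemma is_rep_gen_eigensum_shift:
  assumes "is_rep r" "h \<in> sl" "Y \<in> sl" "mbracket h Y = mscale (of_int \<delta>) Y"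
    and "\<And>i. i \<in> I \<Longrightarrow> i + \<delta> \<in> J" "v \<in> gen_eigensum (r h) \<mu> I"
  shows "r Y *v v \<in> gen_eigensum (r h) \<mu> J"
  using gen_eigensum_shift[OF is_rep_ad_eigenvector[OF assms(1-4)]] assms(5,6) by blast

lemma
  assumes "is_rep r" "P ** P = P" "X \<in> sl"
    and v: "v \<in> gen_eigensum (r (traceless_part P)) \<mu> I"
  shows is_rep_peirce_diag_gen_eigensum:
      "r (peirce_diag P X) *v v \<in> gen_eigensum (r (traceless_part P)) \<mu> I"
    and is_rep_peirce_raise_gen_eigensum:
      "(\<And>i. i \<in> I \<Longrightarrow> i + 1 \<in> J) \<Longrightarrow>
        r (peirce_raise P X) *v v \<in> gen_eigensum (r (traceless_part P)) \<mu> J"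
    and is_rep_peirce_lower_gen_eigensum:
      "(\<And>i. i \<in> I \<Longrightarrow> i - 1 \<in> J) \<Longrightarrow>
        r (peirce_lower P X) *v v \<in> gen_eigensum (r (traceless_part P)) \<mu> J"
proof -
  note shift = is_rep_gen_eigensum_shift[OF assms(1) traceless_part_in_sl _ _ _ v]
  note brackets = mbracket_traceless_part mbracket_peirce_diag[OF assms(2)]
    mbracket_peirce_raise[OF assms(2)] mbracket_peirce_lower[OF assms(2)]
  show "r (peirce_diag P X) *v v \<in> gen_eigensum (r (traceless_part P)) \<mu> I"
    using shift[OF peirce_in_sl(3)[OF assms(2,3)], of 0 I] by (simp add: brackets)
  show "r (peirce_raise P X) *v v \<in> gen_eigensum (r (traceless_part P)) \<mu> J"
    if "\<And>i. i \<in> I \<Longrightarrow> i + 1 \<in> J"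
    using shift[OF peirce_in_sl(1)[OF assms(2,3)], of 1 J] that by (simp add: brackets)
  show "r (peirce_lower P X) *v v \<in> gen_eigensum (r (traceless_part P)) \<mu> J"
    if "\<And>i. i \<in> I \<Longrightarrow> i - 1 \<in> J"
    using shift[OF peirce_in_sl(2)[OF assms(2,3)], of "-1" J] that by (simp add: brackets)
qed

lemma is_rep_commuting_gen_eigensum:
  assumes rep: "is_rep r" and PP: "P ** P = P" and X: "X \<in> sl" "P ** X = X ** P"
    and v: "v \<in> gen_eigensum (r (traceless_part P)) \<mu> I"
  shows "r X *v v \<in> gen_eigensum (r (traceless_part P)) \<mu> I"
proof -
  have "r X = r (peirce_diag P X)"
    using is_rep_peirce_decomposition[OF rep PP X(1)] peirce_commuting[OF PP X(2)] is_rep_zero[OF rep]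
    by simp
  then show ?thesis using is_rep_peirce_diag_gen_eigensum[OF rep PP X(1) v] by simp
qed

lemma is_rep_anticommuting_gen_eigensum:
  assumes rep: "is_rep r" and PP: "P ** P = P" and X: "X \<in> sl" "P ** X + X ** P = X"
    and v: "v \<in> gen_eigensum (r (traceless_part P)) \<mu> I"
    and "\<And>i. i \<in> I \<Longrightarrow> i + 1 \<in> J" "\<And>i. i \<in> I \<Longrightarrow> i - 1 \<in> J"
  shows "r X *v v \<in> gen_eigensum (r (traceless_part P)) \<mu> J"
proof -
  have "r X = r (peirce_raise P X) + r (peirce_lower P X)"
    using is_rep_peirce_decomposition[OF rep PP X(1)] peirce_anticommuting[OF PP X(2)]
      is_rep_zero[OF rep]
    by simp
  then show ?thesis
    using is_rep_peirce_raise_gen_eigensum[OF rep PP X(1) v] is_rep_peirce_lower_gen_eigensum[OF rep PP X(1) v]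
      assms(6,7)
    by (simp add: matrix_vector_mult_add_rdistrib csubspace_add[OF csubspace_gen_eigensum])
qed

lemma irreducible_rep_gen_eigensum_UNIV:
  fixes r :: "complex^'n^'n \<Rightarrow> complex^'m^'m"
  assumes irr: "irreducible_rep r" and PP: "P ** P = P"
    and w: "w \<noteq> 0" "r (traceless_part P) *v w = \<mu> *s w"
  shows "gen_eigensum (r (traceless_part P)) \<mu> UNIV = UNIV"
proof -
  have rep: "is_rep r" using irr by (simp add: irreducible_rep_def)
  have "gen_eigensum (r (traceless_part P)) \<mu> UNIV = {0} \<or>
      gen_eigensum (r (traceless_part P)) \<mu> UNIV = UNIV"
  proof (rule irreducible_repD[OF irr csubspace_gen_eigensum])
    fix X :: "complex^'n^'n" and v
    assume X: "X \<in> sl" and v: "v \<in> gen_eigensum (r (traceless_part P)) \<mu> UNIV"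
    then show "r X *v v \<in> gen_eigensum (r (traceless_part P)) \<mu> UNIV"
      using is_rep_peirce_diag_gen_eigensum[OF rep PP X v] is_rep_peirce_raise_gen_eigensum[OF rep PP X v]
        is_rep_peirce_lower_gen_eigensum[OF rep PP X v]
      by (simp add: is_rep_peirce_decomposition[OF rep PP X] matrix_vector_mult_add_rdistrib
          csubspace_add[OF csubspace_gen_eigensum])
  qed
  moreover have "w \<in> gen_eigensum (r (traceless_part P)) \<mu> UNIV"
    by (rule gen_eigenspace_subset_gen_eigensum) (simp_all add: eigenvector_in_gen_eigenspace w(2))
  ultimately show ?thesis using w(1) by blast
qed

lemma irreducible_rep_idempotent_grading:
  fixes r :: "complex^'n^'n \<Rightarrow> complex^'m^'m"
  assumes irr: "irreducible_rep r" and PP: "P ** P = P"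
    and L0: "\<And>X. X \<in> L0 \<Longrightarrow> X \<in> sl \<and> P ** X = X ** P"
    and L1: "\<And>X. X \<in> L1 \<Longrightarrow> X \<in> sl \<and> P ** X + X ** P = X"
  shows "\<exists>V0 V1 :: (complex^'m) set.
           csubspace V0 \<and> csubspace V1 \<and> V0 \<inter> V1 = {0} \<and>
           (\<forall>v. \<exists>a\<in>V0. \<exists>b\<in>V1. v = a + b) \<and>
           (\<forall>X\<in>L0. (\<forall>v\<in>V0. r X *v v \<in> V0) \<and> (\<forall>v\<in>V1. r X *v v \<in> V1)) \<and>
           (\<forall>X\<in>L1. (\<forall>v\<in>V0. r X *v v \<in> V1) \<and> (\<forall>v\<in>V1. r X *v v \<in> V0))"
proof -
  have rep: "is_rep r" using irr by (simp add: irreducible_rep_def)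
  obtain \<mu> w where w: "w \<noteq> 0" "r (traceless_part P) *v w = \<mu> *s w"
    using matrix_has_eigenvector by blast
  define V where "V I = gen_eigensum (r (traceless_part P)) \<mu> I" for I
  have "{i. even i} \<union> {i. odd i} = (UNIV :: int set)" by auto
  then have "\<exists>a\<in>V {i. even i}. \<exists>b\<in>V {i. odd i}. v = a + b" for v
    using irreducible_rep_gen_eigensum_UNIV[OF irr PP w] gen_eigensum_Un by (metis UNIV_I V_def)
  moreover have "V {i. even i} \<inter> V {i. odd i} = {0}"
    by (simp add: V_def gen_eigensum_disjoint disjoint_iff)
  moreover have "r X *v v \<in> V I" if "X \<in> L0" "v \<in> V I" for X v I
    using is_rep_commuting_gen_eigensum[OF rep PP] L0 that by (simp add: V_def)
  moreover have "r X *v v \<in> V {i. odd i}" if "X \<in> L1" "v \<in> V {i. even i}" for X v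
    using L1[OF that(1)] that(2) unfolding V_def
    by (auto intro!: is_rep_anticommuting_gen_eigensum[OF rep PP, where I = "{i. even i}"])
  moreover have "r X *v v \<in> V {i. even i}" if "X \<in> L1" "v \<in> V {i. odd i}" for X v
    using L1[OF that(1)] that(2) unfolding V_def
    by (auto intro!: is_rep_anticommuting_gen_eigensum[OF rep PP, where I = "{i. odd i}"])
  ultimately show ?thesis
    using csubspace_gen_eigensum unfolding V_def
    by (intro exI[of _ "V {i. even i}"] exI[of _ "V {i. odd i}"]) (auto simp: V_def)
qed

theorem theorem2:
  fixes A Ainv :: "complex^'n^'n"
    and r :: "complex^'n^'n \<Rightarrow> complex^'m^'m"
    and g :: "complex^'n^'n \<Rightarrow> complex^'n^'n"
  assumes n2: "CARD('n) \<ge> 2"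
    and detA: "det A = 1"
    and inv1: "A ** Ainv = mat 1" and inv2: "Ainv ** A = mat 1"
    and g_def: "\<And>X. g X = A ** X ** Ainv"
    and g_nonid: "\<exists>X\<in>sl. g X \<noteq> X"
    and g_inv: "\<forall>X\<in>sl. g (g X) = X"
    and irr: "irreducible_rep r"
  shows "\<exists>V0 V1 :: (complex^'m) set.
           csubspace V0 \<and> csubspace V1 \<and> V0 \<inter> V1 = {0} \<and>
           (\<forall>v. \<exists>a\<in>V0. \<exists>b\<in>V1. v = a + b) \<and>
           (\<forall>X\<in>{X\<in>sl. g X = X}. (\<forall>v\<in>V0. r X *v v \<in> V0) \<and> (\<forall>v\<in>V1. r X *v v \<in> V1)) \<and>
           (\<forall>X\<in>{X\<in>sl. g X = - X}. (\<forall>v\<in>V0. r X *v v \<in> V1) \<and> (\<forall>v\<in>V1. r X *v v \<in> V0))"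
proof -
  have "\<forall>X\<in>sl. A ** (A ** X ** Ainv) ** Ainv = X" using g_inv by (simp add: g_def)
  then obtain B where BB: "B ** B = mat 1"
    and even: "\<And>X. A ** X ** Ainv = X \<Longrightarrow> B ** X = X ** B"
    and odd: "\<And>X. A ** X ** Ainv = - X \<Longrightarrow> B ** X = - (X ** B)"
    by (rule inner_involution_normalize[OF inv1 inv2]) blast
  define P where "P = mat (1/2) ** (mat 1 + B)"
  have "P ** P = P" "\<And>X. g X = X \<Longrightarrow> P ** X = X ** P"
    "\<And>X. g X = - X \<Longrightarrow> P ** X + X ** P = X"
    unfolding P_def g_def by (simp_all add: involution_idempotent[OF BB] even odd)
  then show ?thesis
    by (intro irreducible_rep_idempotent_grading[OF irr]) auto
qed

end
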